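(* Let $(M,\circ)$ be a fuzzy $\Gamma$-hypersemigroup. Then for all $a,b\in M$, $\alpha,\beta\in\Gamma$ and all fuzzy subsets $\mu,\nu,\delta$ of $M$: (i) $a\circ\alpha\circ(b\circ\beta\circ\mu)=(a\circ\alpha\circ b)\circ\beta\circ\mu$; (ii) $a\circ\alpha\circ(\mu\circ\beta\circ b)=(a\circ\alpha\circ\mu)\circ\beta\circ b$; (iii) $\mu\circ\alpha\circ(a\circ\beta\circ b)=(\mu\circ\alpha\circ a)\circ\beta\circ b$; (iv) $\mu\circ\alpha\circ(a\circ\beta\circ\nu)=(\mu\circ\alpha\circ a)\circ\beta\circ\nu$; (v) $a\circ\alpha\circ(\mu\circ\beta\circ\nu)=(a\circ\alpha\circ\mu)\circ\beta\circ\nu$; (vi) $\mu\circ\alpha\circ(\nu\circ\beta\circ a)=(\mu\circ\alpha\circ\nu)\circ\beta\circ a$; (vii) $\mu\circ\alpha\circ(\nu\circ\beta\circ\delta)=(\mu\circ\alpha\circ\nu)\circ\beta\circ\delta$.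
   Context: $M,\Gamma$ are nonempty sets; a fuzzy subset of $M$ is a map $M\to[0,1]$. A fuzzy $\Gamma$-hyperoperation assigns to each $(a,\gamma,b)\in M\times\Gamma\times M$ a fuzzy subset $a\circ\gamma\circ b$. For $a\in M$ and fuzzy $\mu$: $(a\circ\gamma\circ\mu)(r)=\bigvee_{t\in M}((a\circ\gamma\circ t)(r)\wedge\mu(t))$ if $\mu\ne0$, else $0$; $(\mu\circ\gamma\circ a)(r)=\bigvee_{t\in M}(\mu(t)\wedge(t\circ\gamma\circ a)(r))$ if $\mu\ne0$, else $0$. For fuzzy $\mu,\nu$: $(\mu\circ\gamma\circ\nu)(t)=\bigvee_{p,q\in M}(\mu(p)\wedge(p\circ\gamma\circ q)(t)\wedge\nu(q))$. Since $a\circ\alpha\circ b$ is itself a fuzzy subset, expressions like $(a\circ\alpha\circ b)\circ\beta\circ\mu$ use these definitions. $(M,\circ)$ is a fuzzy $\Gamma$-hypersemigroup if $(a\circ\alpha\circ b)\circ\beta\circ c=a\circ\alpha\circ(b\circ\beta\circ c)$ for all $a,b,c\in M$, $\alpha,\beta\in\Gamma$. *)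

theory Defs
  imports Complex_Main
begin

text \<open>M is modelled by the type 'm, Gamma by the type 'g (types are nonempty).
  Fuzzy subsets are real-valued maps with values in [0,1]; joins are real suprema.\<close>

definition fuzzy :: "('m \<Rightarrow> real) \<Rightarrow> bool" where
  "fuzzy \<mu> \<longleftrightarrow> (\<forall>x. 0 \<le> \<mu> x \<and> \<mu> x \<le> 1)"

definition fuzzy_hyperop :: "('m \<Rightarrow> 'g \<Rightarrow> 'm \<Rightarrow> 'm \<Rightarrow> real) \<Rightarrow> bool" where
  "fuzzy_hyperop h \<longleftrightarrow> (\<forall>a g b. fuzzy (h a g b))"

definition elt_fz :: "('m \<Rightarrow> 'g \<Rightarrow> 'm \<Rightarrow> 'm \<Rightarrow> real) \<Rightarrow> 'm \<Rightarrow> 'g \<Rightarrow> ('m \<Rightarrow> real) \<Rightarrow> ('m \<Rightarrow> real)" where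
  "elt_fz h a g \<mu> = (if \<mu> = (\<lambda>_. 0) then (\<lambda>_. 0)
      else (\<lambda>r. SUP t. min (h a g t r) (\<mu> t)))"

definition fz_elt :: "('m \<Rightarrow> 'g \<Rightarrow> 'm \<Rightarrow> 'm \<Rightarrow> real) \<Rightarrow> ('m \<Rightarrow> real) \<Rightarrow> 'g \<Rightarrow> 'm \<Rightarrow> ('m \<Rightarrow> real)" where
  "fz_elt h \<mu> g a = (if \<mu> = (\<lambda>_. 0) then (\<lambda>_. 0)
      else (\<lambda>r. SUP t. min (\<mu> t) (h t g a r)))"

definition fz_fz :: "('m \<Rightarrow> 'g \<Rightarrow> 'm \<Rightarrow> 'm \<Rightarrow> real) \<Rightarrow> ('m \<Rightarrow> real) \<Rightarrow> 'g \<Rightarrow> ('m \<Rightarrow> real) \<Rightarrow> ('m \<Rightarrow> real)" where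
  "fz_fz h \<mu> g \<nu> = (\<lambda>t. SUP pq. min (\<mu> (fst pq)) (min (h (fst pq) g (snd pq) t) (\<nu> (snd pq))))"

definition fuzzy_gamma_hypersemigroup :: "('m \<Rightarrow> 'g \<Rightarrow> 'm \<Rightarrow> 'm \<Rightarrow> real) \<Rightarrow> bool" where
  "fuzzy_gamma_hypersemigroup h \<longleftrightarrow> fuzzy_hyperop h \<and>
     (\<forall>a b c \<alpha> \<beta>. fz_elt h (h a \<alpha> b) \<beta> c = elt_fz h a \<alpha> (h b \<beta> c))"

end

theory Submission
  imports Defs "HOL-Library.Extended_Real" "HOL-Library.Liminf_Limsup"
begin

text \<open>The composition of fuzzy subsets makes sense with values in any complete lattice.
  In a complete distributive lattice both bracketings of \<open>\<mu> \<alpha> \<nu> \<beta> \<delta>\<close> expand into joins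
  over \<open>p, u, v\<close> of \<open>\<mu> p \<sqinter> \<nu> u \<sqinter> \<delta> v\<close> met with the corresponding bracketing of \<open>p \<alpha> u \<beta> v\<close>,
  so associativity on elements, i.e. the hypersemigroup axiom, gives associativity on all fuzzy
  subsets. An element \<open>a\<close> is the fuzzy subset that is \<open>\<top>\<close> at \<open>a\<close> and \<open>\<bottom>\<close> elsewhere, and
  \<open>a \<gamma> b\<close> is the composition of two such points, so all seven identities are instances of this
  single associativity law. The real-valued operations are transported to the extended reals,
  where suprema of families in [0,1] agree with the real ones.\<close>

unbundle lattice_syntax

definition fuzzy_comp ::
    "('m \<Rightarrow> 'g \<Rightarrow> 'm \<Rightarrow> 'm \<Rightarrow> 'c::complete_lattice) \<Rightarrow> ('m \<Rightarrow> 'c) \<Rightarrow> 'g \<Rightarrow> ('m \<Rightarrow> 'c) \<Rightarrow> 'm \<Rightarrow> 'c"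
  where "fuzzy_comp H \<mu> \<gamma> \<nu> r = (SUP p. SUP q. \<mu> p \<sqinter> (H p \<gamma> q r \<sqinter> \<nu> q))"

definition point :: "'m \<Rightarrow> 'm \<Rightarrow> 'c::complete_lattice"
  where "point a x = (if x = a then \<top> else \<bottom>)"

lemma SUP_point_inf: "(SUP x. point a x \<sqinter> f x) = f a"
  by (rule antisym) (auto simp: point_def intro!: SUP_least SUP_upper2[where i=a])

lemma SUP_inf_point: "(SUP x. f x \<sqinter> point a x) = f a"
  using SUP_point_inf[of a f] by (simp add: inf.commute)

context
  fixes H :: "'m \<Rightarrow> 'g \<Rightarrow> 'm \<Rightarrow> 'm \<Rightarrow> 'c::complete_distrib_lattice"
begin

lemma fuzzy_comp_point_left: "fuzzy_comp H (point a) \<gamma> \<nu> r = (SUP q. H a \<gamma> q r \<sqinter> \<nu> q)"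
  unfolding fuzzy_comp_def by (simp add: inf_SUP[symmetric] SUP_point_inf)

lemma fuzzy_comp_point_right: "fuzzy_comp H \<mu> \<gamma> (point b) r = (SUP p. \<mu> p \<sqinter> H p \<gamma> b r)"
  unfolding fuzzy_comp_def by (simp add: inf.assoc[symmetric] SUP_inf_point)

lemma fuzzy_comp_points: "fuzzy_comp H (point a) \<gamma> (point b) = H a \<gamma> b"
  by (rule ext) (simp add: fuzzy_comp_point_left SUP_inf_point)

lemma fuzzy_comp_nested_right_eq:
  "fuzzy_comp H \<mu> \<alpha> (fuzzy_comp H \<nu> \<beta> \<delta>) r =
    (SUP p. SUP u. SUP v. \<mu> p \<sqinter> (\<nu> u \<sqinter> (\<delta> v \<sqinter> (SUP q. H p \<alpha> q r \<sqinter> H u \<beta> v q))))"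
  unfolding fuzzy_comp_def
  by (simp add: inf_SUP SUP_inf ac_simps)
    (rule antisym; fastforce intro!: SUP_least le_infI intro: SUP_upper2 le_infI1 le_infI2)

lemma fuzzy_comp_nested_left_eq:
  "fuzzy_comp H (fuzzy_comp H \<mu> \<alpha> \<nu>) \<beta> \<delta> r =
    (SUP p. SUP u. SUP v. \<mu> p \<sqinter> (\<nu> u \<sqinter> (\<delta> v \<sqinter> (SUP s. H p \<alpha> u s \<sqinter> H s \<beta> v r))))"
  unfolding fuzzy_comp_def
  by (simp add: inf_SUP SUP_inf ac_simps)
    (rule antisym; fastforce intro!: SUP_least le_infI intro: SUP_upper2 le_infI1 le_infI2)

lemma fuzzy_comp_assoc:
  assumes points_assoc:
    "\<And>a \<alpha> b \<beta> c. fuzzy_comp H (H a \<alpha> b) \<beta> (point c) = fuzzy_comp H (point a) \<alpha> (H b \<beta> c)"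
  shows "fuzzy_comp H \<mu> \<alpha> (fuzzy_comp H \<nu> \<beta> \<delta>) = fuzzy_comp H (fuzzy_comp H \<mu> \<alpha> \<nu>) \<beta> \<delta>"
proof
  fix r
  have "(SUP q. H p \<alpha> q r \<sqinter> H u \<beta> v q) = (SUP s. H p \<alpha> u s \<sqinter> H s \<beta> v r)" for p u v
    using fun_cong[OF points_assoc[of p \<alpha> u \<beta> v], of r]
    by (simp add: fuzzy_comp_point_left fuzzy_comp_point_right)
  then show "fuzzy_comp H \<mu> \<alpha> (fuzzy_comp H \<nu> \<beta> \<delta>) r = fuzzy_comp H (fuzzy_comp H \<mu> \<alpha> \<nu>) \<beta> \<delta> r"
    by (simp add: fuzzy_comp_nested_right_eq fuzzy_comp_nested_left_eq)
qed

end

definition lift_ereal :: "('m \<Rightarrow> real) \<Rightarrow> 'm \<Rightarrow> ereal"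
  where "lift_ereal \<mu> x = ereal (\<mu> x)"

definition lift_ereal_hyperop :: "('m \<Rightarrow> 'g \<Rightarrow> 'm \<Rightarrow> 'm \<Rightarrow> real) \<Rightarrow> 'm \<Rightarrow> 'g \<Rightarrow> 'm \<Rightarrow> 'm \<Rightarrow> ereal"
  where "lift_ereal_hyperop h a \<gamma> b = lift_ereal (h a \<gamma> b)"

lemma lift_ereal_inject: "lift_ereal \<mu> = lift_ereal \<nu> \<Longrightarrow> \<mu> = \<nu>"
  unfolding lift_ereal_def by (rule ext) (metis ereal.inject)

lemma fuzzy_SUP:
  assumes "\<And>i x. 0 \<le> F i x \<and> F i x \<le> 1"
  shows "fuzzy (\<lambda>x. SUP i. F i x)"
  unfolding fuzzy_def
proof
  fix x
  have "bdd_above (range (\<lambda>i. F i x))"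
    using assms by (auto intro: bdd_aboveI[of _ 1])
  then have "0 \<le> (SUP i. F i x)"
    using assms by (meson UNIV_I cSUP_upper order_trans)
  moreover have "(SUP i. F i x) \<le> 1"
    using assms by (intro cSUP_least) auto
  ultimately show "0 \<le> (SUP i. F i x) \<and> (SUP i. F i x) \<le> 1" ..
qed

lemma lift_ereal_SUP:
  assumes "\<And>i x. 0 \<le> F i x \<and> F i x \<le> 1"
  shows "lift_ereal (\<lambda>x. SUP i. F i x) = (\<lambda>x. SUP i. ereal (F i x))"
proof
  fix x
  have "\<bar>SUP i. ereal (F i x)\<bar> \<noteq> \<infinity>"
    using assms by (intro ereal_SUP_not_infty[of _ 0 1]) auto
  then show "lift_ereal (\<lambda>x. SUP i. F i x) x = (SUP i. ereal (F i x))"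
    unfolding lift_ereal_def by (rule ereal_SUP)
qed

lemma fuzzy_hyperopD: "fuzzy_hyperop h \<Longrightarrow> fuzzy (h a \<gamma> b)"
  unfolding fuzzy_hyperop_def by blast

lemma fuzzy_hyperop_bounds: "fuzzy_hyperop h \<Longrightarrow> 0 \<le> h a \<gamma> b r \<and> h a \<gamma> b r \<le> 1"
  unfolding fuzzy_hyperop_def fuzzy_def by blast

context
  fixes h :: "'m \<Rightarrow> 'g \<Rightarrow> 'm \<Rightarrow> 'm \<Rightarrow> real"
  assumes h: "fuzzy_hyperop h"
begin

text \<open>The case distinction on the zero fuzzy subset in the definitions is immaterial,
  because the supremum of minima with the zero function is already zero.\<close>

lemma elt_fz_eq_SUP: "elt_fz h a \<gamma> \<mu> = (\<lambda>r. SUP t. min (h a \<gamma> t r) (\<mu> t))"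
  using fuzzy_hyperop_bounds[OF h] by (auto simp: elt_fz_def min_absorb2)

lemma fz_elt_eq_SUP: "fz_elt h \<mu> \<gamma> a = (\<lambda>r. SUP t. min (\<mu> t) (h t \<gamma> a r))"
  using fuzzy_hyperop_bounds[OF h] by (auto simp: fz_elt_def min_absorb1)

lemma fuzzy_elt_fz: "fuzzy \<mu> \<Longrightarrow> fuzzy (elt_fz h a \<gamma> \<mu>)"
  unfolding elt_fz_eq_SUP
  by (rule fuzzy_SUP) (use fuzzy_hyperop_bounds[OF h] in \<open>auto simp: fuzzy_def min_le_iff_disj\<close>)

lemma fuzzy_fz_elt: "fuzzy \<mu> \<Longrightarrow> fuzzy (fz_elt h \<mu> \<gamma> a)"
  unfolding fz_elt_eq_SUP
  by (rule fuzzy_SUP) (use fuzzy_hyperop_bounds[OF h] in \<open>auto simp: fuzzy_def min_le_iff_disj\<close>)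

lemma fuzzy_fz_fz: "fuzzy \<mu> \<Longrightarrow> fuzzy \<nu> \<Longrightarrow> fuzzy (fz_fz h \<mu> \<gamma> \<nu>)"
  unfolding fz_fz_def
  by (rule fuzzy_SUP) (use fuzzy_hyperop_bounds[OF h] in \<open>auto simp: fuzzy_def min_le_iff_disj\<close>)

lemma lift_ereal_elt_fz:
  "fuzzy \<mu> \<Longrightarrow> lift_ereal (elt_fz h a \<gamma> \<mu>)
     = fuzzy_comp (lift_ereal_hyperop h) (point a) \<gamma> (lift_ereal \<mu>)"
  unfolding elt_fz_eq_SUP
  by (subst lift_ereal_SUP)
    (use fuzzy_hyperop_bounds[OF h] in \<open>auto simp: fuzzy_def min_le_iff_disj fuzzy_comp_point_left
       lift_ereal_hyperop_def lift_ereal_def inf_min\<close>)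

lemma lift_ereal_fz_elt:
  "fuzzy \<mu> \<Longrightarrow> lift_ereal (fz_elt h \<mu> \<gamma> a)
     = fuzzy_comp (lift_ereal_hyperop h) (lift_ereal \<mu>) \<gamma> (point a)"
  unfolding fz_elt_eq_SUP
  by (subst lift_ereal_SUP)
    (use fuzzy_hyperop_bounds[OF h] in \<open>auto simp: fuzzy_def min_le_iff_disj fuzzy_comp_point_right
       lift_ereal_hyperop_def lift_ereal_def inf_min\<close>)

lemma lift_ereal_fz_fz:
  "fuzzy \<mu> \<Longrightarrow> fuzzy \<nu> \<Longrightarrow> lift_ereal (fz_fz h \<mu> \<gamma> \<nu>)
     = fuzzy_comp (lift_ereal_hyperop h) (lift_ereal \<mu>) \<gamma> (lift_ereal \<nu>)"
  unfolding fz_fz_def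
  by (subst lift_ereal_SUP)
    (use fuzzy_hyperop_bounds[OF h] in \<open>auto simp: fuzzy_def min_le_iff_disj fuzzy_comp_def SUP_pair
       lift_ereal_hyperop_def lift_ereal_def inf_min\<close>)

end

lemma lift_ereal_hyperop_points_assoc:
  assumes "fuzzy_gamma_hypersemigroup h"
  shows "fuzzy_comp (lift_ereal_hyperop h) (lift_ereal_hyperop h a \<alpha> b) \<beta> (point c)
       = fuzzy_comp (lift_ereal_hyperop h) (point a) \<alpha> (lift_ereal_hyperop h b \<beta> c)"
proof -
  have h: "fuzzy_hyperop h"
    and assoc: "fz_elt h (h a \<alpha> b) \<beta> c = elt_fz h a \<alpha> (h b \<beta> c)"
    using assms unfolding fuzzy_gamma_hypersemigroup_def by blast+
  from arg_cong[OF assoc, of lift_ereal] show ?thesis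
    by (simp add: fuzzy_hyperopD[OF h] lift_ereal_fz_elt[OF h] lift_ereal_elt_fz[OF h]
        lift_ereal_hyperop_def)
qed

theorem theorem3p14:
  fixes h :: "'m \<Rightarrow> 'g \<Rightarrow> 'm \<Rightarrow> 'm \<Rightarrow> real"
    and a b :: 'm and \<alpha> \<beta> :: 'g and \<mu> \<nu> \<delta> :: "'m \<Rightarrow> real"
  assumes "fuzzy_gamma_hypersemigroup h"
    and "fuzzy \<mu>" and "fuzzy \<nu>" and "fuzzy \<delta>"
  shows "elt_fz h a \<alpha> (elt_fz h b \<beta> \<mu>) = fz_fz h (h a \<alpha> b) \<beta> \<mu> \<and>
         elt_fz h a \<alpha> (fz_elt h \<mu> \<beta> b) = fz_elt h (elt_fz h a \<alpha> \<mu>) \<beta> b \<and>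
         fz_fz h \<mu> \<alpha> (h a \<beta> b) = fz_elt h (fz_elt h \<mu> \<alpha> a) \<beta> b \<and>
         fz_fz h \<mu> \<alpha> (elt_fz h a \<beta> \<nu>) = fz_fz h (fz_elt h \<mu> \<alpha> a) \<beta> \<nu> \<and>
         elt_fz h a \<alpha> (fz_fz h \<mu> \<beta> \<nu>) = fz_fz h (elt_fz h a \<alpha> \<mu>) \<beta> \<nu> \<and>
         fz_fz h \<mu> \<alpha> (fz_elt h \<nu> \<beta> a) = fz_elt h (fz_fz h \<mu> \<alpha> \<nu>) \<beta> a \<and>
         fz_fz h \<mu> \<alpha> (fz_fz h \<nu> \<beta> \<delta>) = fz_fz h (fz_fz h \<mu> \<alpha> \<nu>) \<beta> \<delta>"
proof -
  let ?H = "lift_ereal_hyperop h"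
  have h: "fuzzy_hyperop h"
    using assms(1) unfolding fuzzy_gamma_hypersemigroup_def by blast
  have lift_h: "\<And>a \<gamma> b. lift_ereal (h a \<gamma> b) = fuzzy_comp ?H (point a) \<gamma> (point b)"
    by (simp add: fuzzy_comp_points lift_ereal_hyperop_def)
  have assoc: "\<And>\<mu> \<alpha> \<nu> \<beta> \<delta>.
      fuzzy_comp ?H \<mu> \<alpha> (fuzzy_comp ?H \<nu> \<beta> \<delta>) = fuzzy_comp ?H (fuzzy_comp ?H \<mu> \<alpha> \<nu>) \<beta> \<delta>"
    by (rule fuzzy_comp_assoc) (rule lift_ereal_hyperop_points_assoc[OF assms(1)])
  show ?thesis
    by (intro conjI; rule lift_ereal_inject)
      (simp_all add: assms(2-4) fuzzy_hyperopD[OF h] fuzzy_elt_fz[OF h] fuzzy_fz_elt[OF h] fuzzy_fz_fz[OF h]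
        lift_ereal_elt_fz[OF h] lift_ereal_fz_elt[OF h] lift_ereal_fz_fz[OF h] lift_h assoc)
qed

end
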